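(* Let $X,Y$ be Banach spaces and let $T(t):X\to X$ and $S(-t):Y\to Y$, $t\ge0$, be $C_0$ semigroups with $|T(t)|\le e^{\mu_st}$ and $|S(-t)|\le e^{-\mu_ut}$ for $t\ge0$. Equip $X\times Y$ with the max norm $|(x,y)|=\max\{|x|,|y|\}$ and let $B_1:X\times Y\to X$, $B_2:X\times Y\to Y$ be Lipschitz with $\mathrm{Lip}\,B_i\le\varepsilon$. Let $H$ be the continuous correspondence induced by $x(t)=T(t-t_1)x_1+\int_{t_1}^tT(t-s)B_1(x(s),y(s))\,ds$, $y(t)=S(t-t_2)y_2-\int_t^{t_2}S(t-s)B_2(x(s),y(s))\,ds$, $t_1\le t\le t_2$ (see context). Assume $\mu_u-\mu_s-2\varepsilon>0$. Take $\alpha,\beta$ with $\frac{\varepsilon}{\mu_u-\mu_s-\varepsilon}\le\alpha,\beta<1$ and $\lambda_u=e^{-\mu_u+\varepsilon}$, $\lambda_s=e^{\mu_s+\varepsilon}$. Then for every $t\ge0$, $H(t)$ satisfies the (A)$(\alpha,\lambda_u^t)$ (B)$(\beta,\lambda_s^t)$ condition. Moreover, if $\alpha,\beta\in(\frac{\varepsilon}{\mu_u-\mu_s-\varepsilon},1)$ and $t\ge\epsilon_1>0$, then $H(t)$ satisfies (A)$(\alpha;k_\alpha\alpha,\lambda_u^t)$ (B)$(\beta;k_\beta\beta,\lambda_s^t)$, where $k_h=\frac{(\mu_u-\mu_s-\varepsilon-\frac{\varepsilon}{h})e^{-(\mu_u-\mu_s-\varepsilon)\epsilon_1}+\frac{\varepsilon}{h}}{\mu_u-\mu_s-\varepsilon}<1$,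 $h=\alpha,\beta$.
   Context: For $t\le0$ write $S(t)$ for the operator $S(-(-t))$ of the given semigroup, so $S(t-t_2)$, $S(t-s)$ make sense for $t\le t_2$, $t\le s$. For given $x_1\in X$, $y_2\in Y$ and $t_1\le t_2$ the displayed integral system has a unique continuous solution $(x(t),y(t))$ on $[t_1,t_2]$ with $x(t_1)=x_1$, $y(t_2)=y_2$. For $s\ge0$, the correspondence $H(s):X\times Y\to X\times Y$ is defined by: $(x_2,y_2)\in H(s)(x_1,y_1)$ iff there is a continuous $(x(t),y(t))$, $0\le t\le s$, satisfying the system with $t_1=0$, $t_2=s$, $(x(0),y(0))=(x_1,y_1)$, $(x(s),y(s))=(x_2,y_2)$. (A)(B) condition for a correspondence $H$ with graph in $(X\times Y)\times(X\times Y)$: (A)$(\alpha;\alpha',\lambda_u)$(B)$(\beta;\beta',\lambda_s)$ holds if for all $(x_1,y_1)\times(x_2,y_2),(x_1',y_1')\times(x_2',y_2')\in\mathrm{Graph}H$: $|x_1-x_1'|\le\alpha|y_1-y_1'|$ implies $|x_2-x_2'|\le\alpha'|y_2-y_2'|$ and $|y_1-y_1'|\le\lambda_u|y_2-y_2'|$; $|y_2-y_2'|\le\beta|x_2-x_2'|$ implies $|y_1-y_1'|\le\beta'|x_1-x_1'|$ and $|x_2-x_2'|\le\lambda_s|x_1-x_1'|$. (A)$(\alpha,\lambda_u)$(B)$(\beta,\lambda_s)$ means $\alpha'=\alpha$, $\beta'=\beta$. *)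

theory Defs
  imports "HOL-Analysis.Analysis"
begin

definition c0_semigroup :: "(real \<Rightarrow> ('a::banach \<Rightarrow>\<^sub>L 'a)) \<Rightarrow> bool" where
  "c0_semigroup T \<longleftrightarrow>
     T 0 = id_blinfun \<and>
     (\<forall>t s. 0 \<le> t \<longrightarrow> 0 \<le> s \<longrightarrow> T (t + s) = T t o\<^sub>L T s) \<and>
     (\<forall>x. ((\<lambda>t. blinfun_apply (T t) x) \<longlongrightarrow> x) (at_right 0))"

definition lip_max :: "('x::real_normed_vector \<times> 'y::real_normed_vector \<Rightarrow> 'z::real_normed_vector) \<Rightarrow> real \<Rightarrow> bool" where
  "lip_max B eps \<longleftrightarrow>
     (\<forall>p q. norm (B p - B q) \<le> eps * max (norm (fst p - fst q)) (norm (snd p - snd q)))"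

text \<open>Continuous solution of the integral system on [t1,t2]. S is indexed by
  nonpositive reals (S t for t \<le> 0).\<close>
definition solves_sys ::
  "(real \<Rightarrow> ('x::banach \<Rightarrow>\<^sub>L 'x)) \<Rightarrow> (real \<Rightarrow> ('y::banach \<Rightarrow>\<^sub>L 'y)) \<Rightarrow>
   ('x \<times> 'y \<Rightarrow> 'x) \<Rightarrow> ('x \<times> 'y \<Rightarrow> 'y) \<Rightarrow> real \<Rightarrow> real \<Rightarrow>
   (real \<Rightarrow> 'x) \<Rightarrow> (real \<Rightarrow> 'y) \<Rightarrow> bool" where
  "solves_sys T S B1 B2 t1 t2 x y \<longleftrightarrow>
     continuous_on {t1..t2} x \<and> continuous_on {t1..t2} y \<and>
     (\<forall>t\<in>{t1..t2}.
        x t = T (t - t1) (x t1) + integral {t1..t} (\<lambda>s. T (t - s) (B1 (x s, y s))) \<and>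
        y t = S (t - t2) (y t2) - integral {t..t2} (\<lambda>s. S (t - s) (B2 (x s, y s))))"

definition Hcorr ::
  "(real \<Rightarrow> ('x::banach \<Rightarrow>\<^sub>L 'x)) \<Rightarrow> (real \<Rightarrow> ('y::banach \<Rightarrow>\<^sub>L 'y)) \<Rightarrow>
   ('x \<times> 'y \<Rightarrow> 'x) \<Rightarrow> ('x \<times> 'y \<Rightarrow> 'y) \<Rightarrow> real \<Rightarrow>
   ('x \<times> 'y) \<Rightarrow> ('x \<times> 'y) \<Rightarrow> bool" where
  "Hcorr T S B1 B2 s p q \<longleftrightarrow>
     (\<exists>x y. solves_sys T S B1 B2 0 s x y \<and> (x 0, y 0) = p \<and> (x s, y s) = q)"

definition AB_cond ::
  "(('x::real_normed_vector \<times> 'y::real_normed_vector) \<Rightarrow> ('x \<times> 'y) \<Rightarrow> bool) \<Rightarrow>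
   real \<Rightarrow> real \<Rightarrow> real \<Rightarrow> real \<Rightarrow> real \<Rightarrow> real \<Rightarrow> bool" where
  "AB_cond H \<alpha> \<alpha>' lu \<beta> \<beta>' ls \<longleftrightarrow>
     (\<forall>x1 y1 x2 y2 x1' y1' x2' y2'.
        H (x1, y1) (x2, y2) \<longrightarrow> H (x1', y1') (x2', y2') \<longrightarrow>
        (norm (x1 - x1') \<le> \<alpha> * norm (y1 - y1') \<longrightarrow>
            norm (x2 - x2') \<le> \<alpha>' * norm (y2 - y2') \<and>
            norm (y1 - y1') \<le> lu * norm (y2 - y2')) \<and>
        (norm (y2 - y2') \<le> \<beta> * norm (x2 - x2') \<longrightarrow>
            norm (y1 - y1') \<le> \<beta>' * norm (x1 - x1') \<and>
            norm (x2 - x2') \<le> ls * norm (x1 - x1')))"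

end

theory Submission
  imports Defs
begin

(* For two solutions let a = |x - x'| and b = |y - y'|.  The variation-of-constants
   formulas give integral inequalities for a forward in time and for b backward in time.
   As long as a <= b, the inequality for b is linear and Gronwall gives
   b(0) <= exp((-mu_u + eps) t) b(t); inserted into the inequality for a this yields
   a(t) <= (eps/gamma + (h - eps/gamma) exp(-gamma t)) b(t) <= h b(t), where
   gamma = mu_u - mu_s - eps.  Advancing by steps of a fixed short length shows that
   a(0) <= h b(0) with h < 1 keeps a <= b on the whole interval, which gives (A).
   Reversing time exchanges a with b and mu_s with -mu_u, which turns (A) into (B). *)

lemma gronwall_backward:
  fixes g :: "real \<Rightarrow> real"
  assumes gc: "continuous_on {r0..t} g" and e: "0 \<le> e"
    and hyp: "\<And>r. r \<in> {r0..t} \<Longrightarrow> g r \<le> C + e * integral {r..t} g"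
    and r: "r \<in> {r0..t}"
  shows "g r \<le> C * exp (e * (t - r))"
proof -
  have gi: "g integrable_on {r0..t}" using gc integrable_continuous_real by blast
  define G where "G u = integral {r0..t} g - integral {r0..u} g" for u
  have G_eq: "G u = integral {u..t} g" if "u \<in> {r0..t}" for u
    using Henstock_Kurzweil_Integration.integral_combine[of r0 u t g] that gi by (auto simp: G_def)
  define F where "F u = exp (e * u) * (C + e * G u)" for u
  have Fc: "continuous_on {r..t} F"
    unfolding F_def G_def using r
    by (intro continuous_intros continuous_on_subset[OF indefinite_integral_continuous_1[OF gi]]) auto
  have "F r \<le> F t"
  proof (rule DERIV_nonneg_imp_increasing_open[OF _ _ Fc])
    show "r \<le> t" using r by auto
    fix x assume x: "r < x" "x < t"
    then have "x \<in> interior {r0..t}" using r by auto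
    moreover have "((\<lambda>u. integral {r0..u} g) has_vector_derivative g x) (at x within {r0..t})"
      using integral_has_vector_derivative[OF gc] x r by auto
    ultimately have "((\<lambda>u. integral {r0..u} g) has_real_derivative g x) (at x)"
      by (metis at_within_interior has_real_derivative_iff_has_vector_derivative)
    then have "(F has_real_derivative exp (e * x) * (e * (C + e * G x - g x))) (at x)"
      unfolding F_def G_def by (auto intro!: derivative_eq_intros simp: algebra_simps)
    moreover have "g x \<le> C + e * G x" using hyp[of x] G_eq[of x] x r by auto
    ultimately show "\<exists>y. (F has_real_derivative y) (at x) \<and> 0 \<le> y"
      using e by (intro exI[of _ "exp (e * x) * (e * (C + e * G x - g x))"]) simp
  qed
  then have "exp (e * r) * (C + e * G r) \<le> exp (e * t) * C"
    unfolding F_def G_def by simp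
  then have "C + e * G r \<le> exp (e * t) * C / exp (e * r)"
    by (simp add: field_simps)
  also have "\<dots> = C * exp (e * (t - r))"
    by (simp add: exp_diff right_diff_distrib)
  finally show ?thesis using hyp[OF r] G_eq[OF r] by simp
qed

lemma integral_exp_decay:
  fixes \<gamma> t :: real
  assumes "0 < \<gamma>" "0 \<le> t"
  shows "integral {0..t} (\<lambda>s. exp (- \<gamma> * (t - s))) = (1 - exp (- \<gamma> * t)) / \<gamma>"
proof -
  have "((\<lambda>s. exp (- \<gamma> * (t - s))) has_integral
          exp (- \<gamma> * (t - t)) / \<gamma> - exp (- \<gamma> * (t - 0)) / \<gamma>) {0..t}"
  proof (rule fundamental_theorem_of_calculus)
    fix x assume "x \<in> {0..t}"
    have "((\<lambda>s. exp (- \<gamma> * (t - s)) / \<gamma>) has_real_derivative exp (- \<gamma> * (t - x))) (at x)"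
      using assms by (auto intro!: derivative_eq_intros)
    then show "((\<lambda>s. exp (- \<gamma> * (t - s)) / \<gamma>) has_vector_derivative exp (- \<gamma> * (t - x)))
        (at x within {0..t})"
      by (simp add: has_real_derivative_iff_has_vector_derivative has_vector_derivative_at_within)
  qed (use assms in auto)
  then show ?thesis by (simp add: integral_unique diff_divide_distrib)
qed

lemma integral_reflect_shift_real:
  fixes f :: "real \<Rightarrow> 'a::real_normed_vector"
  shows "integral {c - q..c - p} f = integral {p..q} (\<lambda>s. f (c - s))"
proof -
  have "integral {p..q} (\<lambda>s. f (c - s)) = integral {-q..-p} (\<lambda>y. f (y + c))"
    using Henstock_Kurzweil_Integration.integral_reflect_real[of "-p" "-q" "\<lambda>y. f (y + c)"]
    by (simp add: algebra_simps)
  also have "\<dots> = integral {c - q..c - p} f"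
    using integral_shift_real_ivl[of "c - q" c "c - p" f] by simp
  finally show ?thesis by simp
qed

lemma integral_mult_le_bound:
  fixes w m :: "real \<Rightarrow> real"
  assumes "continuous_on {u..v} w" "continuous_on {u..v} m" "u \<le> v"
    and "\<And>r. r \<in> {u..v} \<Longrightarrow> 0 \<le> w r \<and> w r \<le> K"
    and "\<And>r. r \<in> {u..v} \<Longrightarrow> 0 \<le> m r \<and> m r \<le> M"
  shows "integral {u..v} (\<lambda>r. w r * m r) \<le> (v - u) * (K * M)"
proof -
  have "integral {u..v} (\<lambda>r. w r * m r) \<le> integral {u..v} (\<lambda>r. K * M)"
  proof (rule integral_le)
    show "(\<lambda>r. w r * m r) integrable_on {u..v}"
      using assms(1,2) by (intro integrable_continuous_real continuous_intros)
    fix r assume "r \<in> {u..v}"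
    then show "w r * m r \<le> K * M"
      using assms(4,5)[of r] by (intro mult_mono) auto
  qed (rule integrable_const_ivl)
  then show ?thesis using assms(3) by (simp add: ac_simps)
qed

lemma exp_mult_le_exp_mult:
  fixes \<mu> c p \<delta> :: real
  assumes "\<bar>\<mu>\<bar> \<le> c" "0 \<le> p" "p \<le> \<delta>"
  shows "exp (\<mu> * p) \<le> exp (c * \<delta>)"
proof -
  have "\<mu> * p \<le> \<bar>\<mu>\<bar> * p" using assms by (intro mult_right_mono) auto
  also have "\<dots> \<le> c * \<delta>" using assms by (intro mult_mono) auto
  finally show ?thesis by simp
qed

lemma small_step_exists:
  fixes c \<epsilon> h :: real
  assumes "h < 1"
  obtains \<delta> where "0 < \<delta>"
    and "exp (c * \<delta>) * exp (c * \<delta>) * h + \<epsilon> * exp (c * \<delta>) * exp (c * \<delta>) * \<delta>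
        + \<epsilon> * exp (c * \<delta>) * \<delta> < 1"
proof -
  have "((\<lambda>d. exp (c * d) * exp (c * d) * h + \<epsilon> * exp (c * d) * exp (c * d) * d
      + \<epsilon> * exp (c * d) * d) \<longlongrightarrow> h) (at_right 0)"
    by (auto intro!: tendsto_eq_intros)
  then have "\<forall>\<^sub>F d in at_right 0. exp (c * d) * exp (c * d) * h + \<epsilon> * exp (c * d) * exp (c * d) * d
      + \<epsilon> * exp (c * d) * d < 1"
    using assms by (rule order_tendstoD(2))
  then have "\<forall>\<^sub>F d in at_right 0. 0 < d \<and> exp (c * d) * exp (c * d) * h
      + \<epsilon> * exp (c * d) * exp (c * d) * d + \<epsilon> * exp (c * d) * d < 1"
    by (intro eventually_conj eventually_at_right_less)
  then show ?thesis
    using that eventually_happens' trivial_limit_at_right_real by blast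
qed

lemma c0_semigroup_apply_add:
  assumes "c0_semigroup U" "0 \<le> p" "0 \<le> q"
  shows "U p (U q w) = U (p + q) w"
  using assms unfolding c0_semigroup_def by auto

lemma norm_apply_le_exp_abs_bound:
  fixes U :: "real \<Rightarrow> ('a::real_normed_vector \<Rightarrow>\<^sub>L 'a)"
  assumes bd: "\<And>t. 0 \<le> t \<Longrightarrow> norm (U t) \<le> exp (\<omega> * t)" and r: "0 \<le> r" "r \<le> L"
  shows "norm (U r w) \<le> norm w * exp (\<bar>\<omega>\<bar> * L)"
proof -
  have "\<omega> * r \<le> \<bar>\<omega>\<bar> * r" using r by (intro mult_right_mono) auto
  also have "\<dots> \<le> \<bar>\<omega>\<bar> * L" using r by (intro mult_left_mono) auto
  finally have "norm (U r) \<le> exp (\<bar>\<omega>\<bar> * L)"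
    using bd[OF r(1)] by (simp add: order_trans)
  then have "norm w * norm (U r) \<le> norm w * exp (\<bar>\<omega>\<bar> * L)"
    by (rule mult_left_mono) simp
  then show ?thesis using norm_blinfun[of "U r" w] by (simp add: mult.commute)
qed

lemma norm_semigroup_increment_le:
  fixes U :: "real \<Rightarrow> ('a::banach \<Rightarrow>\<^sub>L 'a)"
  assumes sg: "c0_semigroup U" and bd: "\<And>t. 0 \<le> t \<Longrightarrow> norm (U t) \<le> exp (\<omega> * t)"
    and t: "0 \<le> t" and t0: "0 \<le> t0"
  shows "norm (U t v - U t0 v) \<le> norm (U \<bar>t - t0\<bar> v - v) * exp (\<bar>\<omega>\<bar> * t0)"
proof (cases "t0 \<le> t")
  case True
  then have "U t v - U t0 v = U t0 (U \<bar>t - t0\<bar> v - v)"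
    using c0_semigroup_apply_add[OF sg, of t0 "t - t0" v] t0 by (simp add: blinfun.diff_right)
  then show ?thesis
    using norm_apply_le_exp_abs_bound[OF bd, of t0 t0] t0 by simp
next
  case False
  then have "U t0 v - U t v = U t (U (t0 - t) v - v)"
    using c0_semigroup_apply_add[OF sg, of t "t0 - t" v] t by (simp add: blinfun.diff_right)
  then have "norm (U t v - U t0 v) = norm (U t (U (t0 - t) v - v))"
    by (subst norm_minus_commute) simp
  also have "\<dots> \<le> norm (U (t0 - t) v - v) * exp (\<bar>\<omega>\<bar> * t0)"
    using norm_apply_le_exp_abs_bound[OF bd, of t t0] t False by simp
  finally show ?thesis using False by simp
qed

lemma continuous_on_semigroup_orbit:
  fixes U :: "real \<Rightarrow> ('a::banach \<Rightarrow>\<^sub>L 'a)"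
  assumes sg: "c0_semigroup U" and bd: "\<And>t. 0 \<le> t \<Longrightarrow> norm (U t) \<le> exp (\<omega> * t)"
  shows "continuous_on {0..} (\<lambda>t. U t v)"
  unfolding continuous_on_def
proof
  fix t0 :: real assume t0: "t0 \<in> {0..}"
  have "((\<lambda>t. \<bar>t - t0\<bar>) \<longlongrightarrow> 0) (at t0 within {0..})"
    by (intro tendsto_eq_intros) auto
  moreover have "eventually (\<lambda>t. \<bar>t - t0\<bar> \<in> {0<..} \<and> \<bar>t - t0\<bar> \<noteq> 0) (at t0 within {0..})"
    by (auto simp: eventually_at_filter)
  ultimately have "filterlim (\<lambda>t. \<bar>t - t0\<bar>) (at_right 0) (at t0 within {0..})"
    by (simp add: filterlim_at)
  moreover have "((\<lambda>r. U r v) \<longlongrightarrow> v) (at_right 0)"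
    using sg unfolding c0_semigroup_def by blast
  ultimately have "((\<lambda>t. U \<bar>t - t0\<bar> v) \<longlongrightarrow> v) (at t0 within {0..})"
    by (rule filterlim_compose[rotated])
  then have "((\<lambda>t. U \<bar>t - t0\<bar> v - v) \<longlongrightarrow> 0) (at t0 within {0..})"
    by (simp add: LIM_zero_iff)
  moreover have "eventually (\<lambda>t. norm (U t v - U t0 v) \<le> norm (U \<bar>t - t0\<bar> v - v) * exp (\<bar>\<omega>\<bar> * t0))
      (at t0 within {0..})"
    unfolding eventually_at_filter
    by (rule always_eventually) (use norm_semigroup_increment_le[OF sg bd] t0 in auto)
  ultimately have "((\<lambda>t. U t v - U t0 v) \<longlongrightarrow> 0) (at t0 within {0..})"
    by (rule tendsto_0_le)
  then show "((\<lambda>t. U t v) \<longlongrightarrow> U t0 v) (at t0 within {0..})"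
    by (simp add: LIM_zero_iff)
qed

lemma continuous_on_semigroup_apply:
  fixes U :: "real \<Rightarrow> ('a::banach \<Rightarrow>\<^sub>L 'a)"
  assumes sg: "c0_semigroup U" and bd: "\<And>t. 0 \<le> t \<Longrightarrow> norm (U t) \<le> exp (\<omega> * t)"
    and gc: "continuous_on A g" and \<phi>c: "continuous_on A \<phi>"
    and \<phi>_range: "\<And>s. s \<in> A \<Longrightarrow> 0 \<le> \<phi> s \<and> \<phi> s \<le> L"
  shows "continuous_on A (\<lambda>s. U (\<phi> s) (g s))"
  unfolding continuous_on_def
proof
  fix s0 assume s0: "s0 \<in> A"
  have "continuous_on A (\<lambda>s. U (\<phi> s) (g s0))"
    by (rule continuous_on_compose2[OF continuous_on_semigroup_orbit[OF sg bd] \<phi>c])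
      (use \<phi>_range in auto)
  then have fixed_arg: "((\<lambda>s. U (\<phi> s) (g s0)) \<longlongrightarrow> U (\<phi> s0) (g s0)) (at s0 within A)"
    using s0 unfolding continuous_on_def by auto
  have "((\<lambda>s. g s - g s0) \<longlongrightarrow> 0) (at s0 within A)"
    using gc s0 unfolding continuous_on_def by (simp add: LIM_zero_iff)
  moreover have "eventually (\<lambda>s. norm (U (\<phi> s) (g s - g s0)) \<le> norm (g s - g s0) * exp (\<bar>\<omega>\<bar> * L))
      (at s0 within A)"
    using norm_apply_le_exp_abs_bound[OF bd] \<phi>_range by (auto simp: eventually_at_filter)
  ultimately have "((\<lambda>s. U (\<phi> s) (g s - g s0)) \<longlongrightarrow> 0) (at s0 within A)"
    by (rule tendsto_0_le)
  from tendsto_add[OF this fixed_arg]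
  show "((\<lambda>s. U (\<phi> s) (g s)) \<longlongrightarrow> U (\<phi> s0) (g s0)) (at s0 within A)"
    by (simp add: blinfun.diff_right)
qed

lemma integrable_semigroup_apply:
  fixes U :: "real \<Rightarrow> ('a::banach \<Rightarrow>\<^sub>L 'a)" and p q :: real
  assumes sg: "c0_semigroup U" and bd: "\<And>t. 0 \<le> t \<Longrightarrow> norm (U t) \<le> exp (\<omega> * t)"
    and gc: "continuous_on {p..q} g" and \<phi>c: "continuous_on {p..q} \<phi>"
    and \<phi>_range: "\<And>s. s \<in> {p..q} \<Longrightarrow> 0 \<le> \<phi> s \<and> \<phi> s \<le> L"
  shows "(\<lambda>s. U (\<phi> s) (g s)) integrable_on {p..q}"
  by (rule integrable_continuous_real, rule continuous_on_semigroup_apply[OF sg bd gc \<phi>c \<phi>_range])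

lemma mild_solution_restart_forward:
  fixes U :: "real \<Rightarrow> ('a::banach \<Rightarrow>\<^sub>L 'a)"
  assumes sg: "c0_semigroup U" and bd: "\<And>t. 0 \<le> t \<Longrightarrow> norm (U t) \<le> exp (\<omega> * t)"
    and gc: "continuous_on {t1..t2} g"
    and z: "\<And>t. t \<in> {t1..t2} \<Longrightarrow> z t = U (t - t1) (z t1) + integral {t1..t} (\<lambda>s. U (t - s) (g s))"
    and tt: "t1 \<le> t" "t \<le> t'" "t' \<le> t2"
  shows "z t' = U (t' - t) (z t) + integral {t..t'} (\<lambda>s. U (t' - s) (g s))"
proof -
  have int: "(\<lambda>s. U (r - s) (g s)) integrable_on {t1..r}" if "r \<in> {t1..t2}" for r
    using that by (intro integrable_semigroup_apply[OF sg bd, where L = "r - t1"]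
        continuous_on_subset[OF gc] continuous_intros) auto
  have "U (t' - t) (integral {t1..t} (\<lambda>s. U (t - s) (g s)))
      = integral {t1..t} (\<lambda>s. U (t' - t) (U (t - s) (g s)))"
    using tt by (intro integral_blinfun_apply[symmetric] int) auto
  also have "\<dots> = integral {t1..t} (\<lambda>s. U (t' - s) (g s))"
    by (rule integral_cong) (use c0_semigroup_apply_add[OF sg] tt in auto)
  finally have "U (t' - t) (z t)
      = U (t' - t1) (z t1) + integral {t1..t} (\<lambda>s. U (t' - s) (g s))"
    using z[of t] c0_semigroup_apply_add[OF sg, of "t' - t" "t - t1"] tt
    by (simp add: blinfun.add_right)
  moreover have "integral {t1..t'} (\<lambda>s. U (t' - s) (g s))
     = integral {t1..t} (\<lambda>s. U (t' - s) (g s)) + integral {t..t'} (\<lambda>s. U (t' - s) (g s))"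
    using Henstock_Kurzweil_Integration.integral_combine[OF _ _ int] tt by simp
  ultimately show ?thesis using z[of t'] tt by simp
qed

lemma mild_solution_restart_backward:
  fixes V :: "real \<Rightarrow> ('a::banach \<Rightarrow>\<^sub>L 'a)"
  assumes sg: "c0_semigroup V" and bd: "\<And>t. 0 \<le> t \<Longrightarrow> norm (V t) \<le> exp (\<omega> * t)"
    and gc: "continuous_on {t1..t2} g"
    and z: "\<And>t. t \<in> {t1..t2} \<Longrightarrow> z t = V (t2 - t) (z t2) - integral {t..t2} (\<lambda>s. V (s - t) (g s))"
    and tt: "t1 \<le> t" "t \<le> t'" "t' \<le> t2"
  shows "z t = V (t' - t) (z t') - integral {t..t'} (\<lambda>s. V (s - t) (g s))"
proof -
  have int: "(\<lambda>s. V (s - r) (g s)) integrable_on {r..t2}" if "r \<in> {t1..t2}" for r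
    using that by (intro integrable_semigroup_apply[OF sg bd, where L = "t2 - r"]
        continuous_on_subset[OF gc] continuous_intros) auto
  have "V (t' - t) (integral {t'..t2} (\<lambda>s. V (s - t') (g s)))
      = integral {t'..t2} (\<lambda>s. V (t' - t) (V (s - t') (g s)))"
    using tt by (intro integral_blinfun_apply[symmetric] int) auto
  also have "\<dots> = integral {t'..t2} (\<lambda>s. V (s - t) (g s))"
    by (rule integral_cong) (use c0_semigroup_apply_add[OF sg] tt in auto)
  finally have restart: "V (t' - t) (z t')
      = V (t2 - t) (z t2) - integral {t'..t2} (\<lambda>s. V (s - t) (g s))"
    using z[of t'] c0_semigroup_apply_add[OF sg, of "t' - t" "t2 - t'"] tt
    by (simp add: blinfun.diff_right)
  moreover have "z t = V (t2 - t) (z t2) - integral {t..t2} (\<lambda>s. V (s - t) (g s))"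
    using z[of t] tt by simp
  moreover have "integral {t..t2} (\<lambda>s. V (s - t) (g s))
     = integral {t..t'} (\<lambda>s. V (s - t) (g s)) + integral {t'..t2} (\<lambda>s. V (s - t) (g s))"
    using Henstock_Kurzweil_Integration.integral_combine[OF _ _ int] tt by simp
  ultimately show ?thesis by (simp add: restart diff_diff_eq add.commute)
qed

lemma norm_integral_semigroup_diff_le:
  fixes U :: "real \<Rightarrow> ('a::banach \<Rightarrow>\<^sub>L 'a)" and p q :: real
  assumes sg: "c0_semigroup U" and bd: "\<And>t. 0 \<le> t \<Longrightarrow> norm (U t) \<le> exp (\<omega> * t)"
    and gc: "continuous_on {p..q} g" and gc': "continuous_on {p..q} g'"
    and \<phi>c: "continuous_on {p..q} \<phi>" and \<phi>_range: "\<And>s. s \<in> {p..q} \<Longrightarrow> 0 \<le> \<phi> s \<and> \<phi> s \<le> L"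
    and mc: "continuous_on {p..q} m"
    and le: "\<And>s. s \<in> {p..q} \<Longrightarrow> norm (g s - g' s) \<le> \<epsilon> * m s"
  shows "norm (integral {p..q} (\<lambda>s. U (\<phi> s) (g s)) - integral {p..q} (\<lambda>s. U (\<phi> s) (g' s)))
         \<le> \<epsilon> * integral {p..q} (\<lambda>s. exp (\<omega> * \<phi> s) * m s)"
proof -
  have int: "(\<lambda>s. U (\<phi> s) (g s)) integrable_on {p..q}" "(\<lambda>s. U (\<phi> s) (g' s)) integrable_on {p..q}"
    using integrable_semigroup_apply[OF sg _ _ \<phi>c, of \<omega> _ L] bd gc gc' \<phi>_range by auto
  have "norm (integral {p..q} (\<lambda>s. U (\<phi> s) (g s) - U (\<phi> s) (g' s)))
      \<le> integral {p..q} (\<lambda>s. \<epsilon> * (exp (\<omega> * \<phi> s) * m s))"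
  proof (rule integral_norm_bound_integral)
    show "(\<lambda>s. U (\<phi> s) (g s) - U (\<phi> s) (g' s)) integrable_on {p..q}"
      using int by (rule integrable_diff)
    show "(\<lambda>s. \<epsilon> * (exp (\<omega> * \<phi> s) * m s)) integrable_on {p..q}"
      by (intro integrable_continuous_real continuous_intros \<phi>c mc)
    fix s assume s: "s \<in> {p..q}"
    have "norm (U (\<phi> s) (g s - g' s)) \<le> norm (U (\<phi> s)) * norm (g s - g' s)"
      by (rule norm_blinfun)
    also have "\<dots> \<le> exp (\<omega> * \<phi> s) * (\<epsilon> * m s)"
      using bd[of "\<phi> s"] \<phi>_range[OF s] le[OF s] by (intro mult_mono) auto
    finally show "norm (U (\<phi> s) (g s) - U (\<phi> s) (g' s)) \<le> \<epsilon> * (exp (\<omega> * \<phi> s) * m s)"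
      by (simp add: blinfun.diff_right algebra_simps)
  qed
  then show ?thesis by (simp add: integral_diff[OF int])
qed

lemma mild_solution_diff_le_forward:
  fixes U :: "real \<Rightarrow> ('a::banach \<Rightarrow>\<^sub>L 'a)"
  assumes sg: "c0_semigroup U" and bd: "\<And>t. 0 \<le> t \<Longrightarrow> norm (U t) \<le> exp (\<omega> * t)"
    and gc: "continuous_on {t1..t2} g" and gc': "continuous_on {t1..t2} g'"
    and z: "\<And>t. t \<in> {t1..t2} \<Longrightarrow> z t = U (t - t1) (z t1) + integral {t1..t} (\<lambda>s. U (t - s) (g s))"
    and z': "\<And>t. t \<in> {t1..t2} \<Longrightarrow> z' t = U (t - t1) (z' t1) + integral {t1..t} (\<lambda>s. U (t - s) (g' s))"
    and mc: "continuous_on {t1..t2} m"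
    and le: "\<And>s. s \<in> {t1..t2} \<Longrightarrow> norm (g s - g' s) \<le> \<epsilon> * m s"
    and tt: "t1 \<le> t" "t \<le> t'" "t' \<le> t2"
  shows "norm (z t' - z' t') \<le> exp (\<omega> * (t' - t)) * norm (z t - z' t)
           + \<epsilon> * integral {t..t'} (\<lambda>s. exp (\<omega> * (t' - s)) * m s)"
proof -
  have sub: "{t..t'} \<subseteq> {t1..t2}" using tt by auto
  have "z t' - z' t' = U (t' - t) (z t - z' t)
      + (integral {t..t'} (\<lambda>s. U (t' - s) (g s)) - integral {t..t'} (\<lambda>s. U (t' - s) (g' s)))"
    using mild_solution_restart_forward[OF sg bd gc z tt] mild_solution_restart_forward[OF sg bd gc' z' tt]
    by (simp add: blinfun.diff_right)
  moreover have "norm (U (t' - t) w) \<le> exp (\<omega> * (t' - t)) * norm w" for w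
    using norm_blinfun[of "U (t' - t)" w] mult_right_mono[OF bd[of "t' - t"], of "norm w"] tt
    by simp
  moreover have "norm (integral {t..t'} (\<lambda>s. U (t' - s) (g s)) - integral {t..t'} (\<lambda>s. U (t' - s) (g' s)))
      \<le> \<epsilon> * integral {t..t'} (\<lambda>s. exp (\<omega> * (t' - s)) * m s)"
    using sub le by (intro norm_integral_semigroup_diff_le[OF sg bd, where L = "t' - t"]
        continuous_on_subset[OF gc] continuous_on_subset[OF gc'] continuous_on_subset[OF mc]
        continuous_intros) auto
  ultimately show ?thesis using norm_triangle_ineq by (smt (verit))
qed

lemma mild_solution_diff_le_backward:
  fixes V :: "real \<Rightarrow> ('a::banach \<Rightarrow>\<^sub>L 'a)"
  assumes sg: "c0_semigroup V" and bd: "\<And>t. 0 \<le> t \<Longrightarrow> norm (V t) \<le> exp (\<omega> * t)"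
    and gc: "continuous_on {t1..t2} g" and gc': "continuous_on {t1..t2} g'"
    and z: "\<And>t. t \<in> {t1..t2} \<Longrightarrow> z t = V (t2 - t) (z t2) - integral {t..t2} (\<lambda>s. V (s - t) (g s))"
    and z': "\<And>t. t \<in> {t1..t2} \<Longrightarrow> z' t = V (t2 - t) (z' t2) - integral {t..t2} (\<lambda>s. V (s - t) (g' s))"
    and mc: "continuous_on {t1..t2} m"
    and le: "\<And>s. s \<in> {t1..t2} \<Longrightarrow> norm (g s - g' s) \<le> \<epsilon> * m s"
    and tt: "t1 \<le> t" "t \<le> t'" "t' \<le> t2"
  shows "norm (z t - z' t) \<le> exp (\<omega> * (t' - t)) * norm (z t' - z' t')
           + \<epsilon> * integral {t..t'} (\<lambda>s. exp (\<omega> * (s - t)) * m s)"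
proof -
  have sub: "{t..t'} \<subseteq> {t1..t2}" using tt by auto
  have "z t - z' t = V (t' - t) (z t' - z' t')
      - (integral {t..t'} (\<lambda>s. V (s - t) (g s)) - integral {t..t'} (\<lambda>s. V (s - t) (g' s)))"
    using mild_solution_restart_backward[OF sg bd gc z tt] mild_solution_restart_backward[OF sg bd gc' z' tt]
    by (simp add: blinfun.diff_right)
  moreover have "norm (V (t' - t) w) \<le> exp (\<omega> * (t' - t)) * norm w" for w
    using norm_blinfun[of "V (t' - t)" w] mult_right_mono[OF bd[of "t' - t"], of "norm w"] tt
    by simp
  moreover have "norm (integral {t..t'} (\<lambda>s. V (s - t) (g s)) - integral {t..t'} (\<lambda>s. V (s - t) (g' s)))
      \<le> \<epsilon> * integral {t..t'} (\<lambda>s. exp (\<omega> * (s - t)) * m s)"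
    using sub le by (intro norm_integral_semigroup_diff_le[OF sg bd, where L = "t' - t"]
        continuous_on_subset[OF gc] continuous_on_subset[OF gc'] continuous_on_subset[OF mc]
        continuous_intros) auto
  ultimately show ?thesis using norm_triangle_ineq4 by (smt (verit))
qed

definition cone_slope :: "real \<Rightarrow> real \<Rightarrow> real \<Rightarrow> real \<Rightarrow> real" where
  "cone_slope \<gamma> \<epsilon> h t = \<epsilon> / \<gamma> + (h - \<epsilon> / \<gamma>) * exp (- \<gamma> * t)"

lemma cone_slope_le:
  fixes \<gamma> \<epsilon> h t :: real
  assumes "0 < \<gamma>" "\<epsilon> / \<gamma> \<le> h" "0 \<le> t"
  shows "cone_slope \<gamma> \<epsilon> h t \<le> h"
proof -
  have "(h - \<epsilon> / \<gamma>) * exp (- \<gamma> * t) \<le> (h - \<epsilon> / \<gamma>) * 1"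
    using assms by (intro mult_left_mono) auto
  then show ?thesis by (simp add: cone_slope_def)
qed

lemma cone_slope_le_contraction:
  fixes \<gamma> \<epsilon> h t \<epsilon>1 :: real
  assumes g: "0 < \<gamma>" and e: "0 \<le> \<epsilon>" and h: "\<epsilon> / \<gamma> < h" and e1: "0 < \<epsilon>1" "\<epsilon>1 \<le> t"
  shows "cone_slope \<gamma> \<epsilon> h t \<le> ((\<gamma> - \<epsilon> / h) * exp (- \<gamma> * \<epsilon>1) + \<epsilon> / h) / \<gamma> * h"
proof -
  have "0 \<le> \<epsilon> / \<gamma>" using e g by (rule divide_nonneg_pos)
  then have "0 < h" using h by linarith
  have "(h - \<epsilon> / \<gamma>) * exp (- \<gamma> * t) \<le> (h - \<epsilon> / \<gamma>) * exp (- \<gamma> * \<epsilon>1)"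
    using g e1 h by (intro mult_left_mono) auto
  also have "\<dots> = ((\<gamma> - \<epsilon> / h) * exp (- \<gamma> * \<epsilon>1) + \<epsilon> / h) / \<gamma> * h - \<epsilon> / \<gamma>"
    using g \<open>0 < h\<close> by (simp add: field_simps)
  finally show ?thesis by (simp add: cone_slope_def)
qed

lemma contraction_factor_less_one:
  fixes \<gamma> \<epsilon> h \<epsilon>1 :: real
  assumes g: "0 < \<gamma>" and e: "0 \<le> \<epsilon>" and h: "\<epsilon> / \<gamma> < h" and e1: "0 < \<epsilon>1"
  shows "((\<gamma> - \<epsilon> / h) * exp (- \<gamma> * \<epsilon>1) + \<epsilon> / h) / \<gamma> < 1"
proof -
  have "0 \<le> \<epsilon> / \<gamma>" using e g by (rule divide_nonneg_pos)
  then have "0 < h" using h by linarith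
  then have "0 < \<gamma> - \<epsilon> / h" using h g by (simp add: field_simps)
  moreover have "exp (- \<gamma> * \<epsilon>1) < 1" using g e1 by simp
  ultimately have "(\<gamma> - \<epsilon> / h) * exp (- \<gamma> * \<epsilon>1) < \<gamma> - \<epsilon> / h"
    by (metis mult.right_neutral mult_strict_left_mono)
  then show ?thesis using g by simp
qed

locale dichotomy_estimates =
  fixes a b :: "real \<Rightarrow> real" and \<mu>s \<mu>u \<epsilon> \<tau> :: real
  assumes tau_nonneg: "0 \<le> \<tau>"
    and a_cont: "continuous_on {0..\<tau>} a" and b_cont: "continuous_on {0..\<tau>} b"
    and a_nonneg: "\<And>s. s \<in> {0..\<tau>} \<Longrightarrow> 0 \<le> a s"
    and b_nonneg: "\<And>s. s \<in> {0..\<tau>} \<Longrightarrow> 0 \<le> b s"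
    and forward: "\<And>t t'. 0 \<le> t \<Longrightarrow> t \<le> t' \<Longrightarrow> t' \<le> \<tau> \<Longrightarrow>
       a t' \<le> exp (\<mu>s * (t' - t)) * a t
          + \<epsilon> * integral {t..t'} (\<lambda>s. exp (\<mu>s * (t' - s)) * max (a s) (b s))"
    and backward: "\<And>t t'. 0 \<le> t \<Longrightarrow> t \<le> t' \<Longrightarrow> t' \<le> \<tau> \<Longrightarrow>
       b t \<le> exp (- \<mu>u * (t' - t)) * b t'
          + \<epsilon> * integral {t..t'} (\<lambda>s. exp (- \<mu>u * (s - t)) * max (a s) (b s))"
    and eps_nonneg: "0 \<le> \<epsilon>"
    and gap: "0 < \<mu>u - \<mu>s - \<epsilon>"
begin

lemma time_reversal: "dichotomy_estimates (\<lambda>r. b (\<tau> - r)) (\<lambda>r. a (\<tau> - r)) (- \<mu>u) (- \<mu>s) \<epsilon> \<tau>"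
proof
  have reflect: "(\<lambda>r. \<tau> - r) ` {0..\<tau>} \<subseteq> {0..\<tau>}" by auto
  show "continuous_on {0..\<tau>} (\<lambda>r. b (\<tau> - r))" "continuous_on {0..\<tau>} (\<lambda>r. a (\<tau> - r))"
    by (intro continuous_on_compose2[OF b_cont _ reflect] continuous_on_compose2[OF a_cont _ reflect]
        continuous_intros)+
  fix r r' assume rr: "0 \<le> r" "r \<le> r'" "r' \<le> \<tau>"
  have "integral {\<tau> - r'..\<tau> - r} (\<lambda>s. exp (- \<mu>u * (s - (\<tau> - r'))) * max (a s) (b s))
      = integral {r..r'} (\<lambda>s. exp (- \<mu>u * (r' - s)) * max (b (\<tau> - s)) (a (\<tau> - s)))"
    by (simp add: integral_reflect_shift_real max.commute algebra_simps)
  then show "b (\<tau> - r') \<le> exp (- \<mu>u * (r' - r)) * b (\<tau> - r)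
      + \<epsilon> * integral {r..r'} (\<lambda>s. exp (- \<mu>u * (r' - s)) * max (b (\<tau> - s)) (a (\<tau> - s)))"
    using backward[of "\<tau> - r'" "\<tau> - r"] rr by simp
  have "integral {\<tau> - r'..\<tau> - r} (\<lambda>s. exp (\<mu>s * ((\<tau> - r) - s)) * max (a s) (b s))
      = integral {r..r'} (\<lambda>s. exp (- (- \<mu>s) * (s - r)) * max (b (\<tau> - s)) (a (\<tau> - s)))"
    by (simp add: integral_reflect_shift_real max.commute algebra_simps)
  then show "a (\<tau> - r) \<le> exp (- (- \<mu>s) * (r' - r)) * a (\<tau> - r')
      + \<epsilon> * integral {r..r'} (\<lambda>s. exp (- (- \<mu>s) * (s - r)) * max (b (\<tau> - s)) (a (\<tau> - s)))"
    using forward[of "\<tau> - r'" "\<tau> - r"] rr by simp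
qed (use tau_nonneg a_nonneg b_nonneg eps_nonneg gap in auto)

lemma b_le_backward_growth:
  assumes t: "t \<in> {0..\<tau>}" and cone: "\<And>s. s \<in> {0..t} \<Longrightarrow> a s \<le> b s" and r: "r \<in> {0..t}"
  shows "b r \<le> exp ((- \<mu>u + \<epsilon>) * (t - r)) * b t"
proof -
  \<comment> \<open>inside the cone \<open>max (a s) (b s) = b s\<close>, so the backward inequality becomes
    a Gronwall inequality for \<open>g\<close>\<close>
  define g where "g s = exp (- \<mu>u * s) * b s" for s
  have gc: "continuous_on {0..t} g"
    unfolding g_def using t by (intro continuous_intros continuous_on_subset[OF b_cont]) auto
  have "g r \<le> g t + \<epsilon> * integral {r..t} g" if r: "r \<in> {0..t}" for r
  proof -
    have "integral {r..t} (\<lambda>s. exp (- \<mu>u * (s - r)) * max (a s) (b s))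
        = integral {r..t} (\<lambda>s. exp (- \<mu>u * (s - r)) * b s)"
      by (rule integral_cong) (use r cone in \<open>auto simp: max_def\<close>)
    also have "\<dots> = exp (\<mu>u * r) * integral {r..t} g"
      unfolding g_def integral_mult_right[symmetric]
      by (rule integral_cong) (simp add: mult_exp_exp algebra_simps)
    finally have "b r \<le> exp (- \<mu>u * (t - r)) * b t + \<epsilon> * (exp (\<mu>u * r) * integral {r..t} g)"
      using backward[of r t] r t by auto
    then have "g r \<le> exp (- \<mu>u * r) * (exp (- \<mu>u * (t - r)) * b t + \<epsilon> * (exp (\<mu>u * r) * integral {r..t} g))"
      unfolding g_def by (rule mult_left_mono) simp
    also have "\<dots> = (exp (- \<mu>u * r) * exp (- \<mu>u * (t - r))) * b t
        + \<epsilon> * (exp (- \<mu>u * r) * exp (\<mu>u * r)) * integral {r..t} g"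
      by (simp add: algebra_simps)
    also have "\<dots> = g t + \<epsilon> * integral {r..t} g"
      unfolding g_def mult_exp_exp by (simp add: algebra_simps)
    finally show ?thesis .
  qed
  then have "g r \<le> g t * exp (\<epsilon> * (t - r))"
    using gronwall_backward[OF gc eps_nonneg] r by blast
  then have "exp (\<mu>u * r) * g r \<le> exp (\<mu>u * r) * (g t * exp (\<epsilon> * (t - r)))"
    by (rule mult_left_mono) simp
  also have "\<dots> = exp (\<mu>u * r) * exp (- \<mu>u * t) * exp (\<epsilon> * (t - r)) * b t"
    by (simp add: g_def algebra_simps)
  also have "\<dots> = exp ((- \<mu>u + \<epsilon>) * (t - r)) * b t"
    unfolding mult_exp_exp by (simp add: algebra_simps)
  finally show ?thesis
    unfolding g_def mult.assoc[symmetric] mult_exp_exp by simp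
qed

lemma a_le_cone_slope:
  assumes t: "t \<in> {0..\<tau>}" and cone: "\<And>s. s \<in> {0..t} \<Longrightarrow> a s \<le> b s"
    and start: "a 0 \<le> h * b 0" and h: "0 \<le> h"
  shows "a t \<le> cone_slope (\<mu>u - \<mu>s - \<epsilon>) \<epsilon> h t * b t"
proof -
  define \<gamma> where "\<gamma> = \<mu>u - \<mu>s - \<epsilon>"
  have \<gamma>: "0 < \<gamma>" using gap by (simp add: \<gamma>_def)
  have growth: "b s \<le> exp ((- \<mu>u + \<epsilon>) * (t - s)) * b t" if "s \<in> {0..t}" for s
    using b_le_backward_growth[OF t] cone that by blast
  have decay: "exp (\<mu>s * (t - s)) * b s \<le> exp (- \<gamma> * (t - s)) * b t" if s: "s \<in> {0..t}" for s
  proof -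
    have "exp (\<mu>s * (t - s)) * b s \<le> exp (\<mu>s * (t - s)) * (exp ((- \<mu>u + \<epsilon>) * (t - s)) * b t)"
      using growth[OF s] by (rule mult_left_mono) simp
    also have "\<dots> = exp (- \<gamma> * (t - s)) * b t"
      unfolding mult.assoc[symmetric] mult_exp_exp by (simp add: \<gamma>_def algebra_simps)
    finally show ?thesis .
  qed
  have "integral {0..t} (\<lambda>s. exp (\<mu>s * (t - s)) * max (a s) (b s))
      = integral {0..t} (\<lambda>s. exp (\<mu>s * (t - s)) * b s)"
    by (rule integral_cong) (use cone in \<open>auto simp: max_def\<close>)
  also have "\<dots> \<le> integral {0..t} (\<lambda>s. exp (- \<gamma> * (t - s)) * b t)"
    using t decay
    by (intro integral_le integrable_continuous_real continuous_intros
        continuous_on_subset[OF b_cont]) auto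
  also have "\<dots> = (1 - exp (- \<gamma> * t)) / \<gamma> * b t"
    using integral_exp_decay[OF \<gamma>, of t] t by simp
  finally have "\<epsilon> * integral {0..t} (\<lambda>s. exp (\<mu>s * (t - s)) * max (a s) (b s))
      \<le> \<epsilon> * ((1 - exp (- \<gamma> * t)) / \<gamma> * b t)"
    using eps_nonneg by (rule mult_left_mono)
  moreover have "a t \<le> exp (\<mu>s * t) * a 0
      + \<epsilon> * integral {0..t} (\<lambda>s. exp (\<mu>s * (t - s)) * max (a s) (b s))"
    using forward[of 0 t] t by simp
  moreover have "exp (\<mu>s * t) * a 0 \<le> h * exp (- \<gamma> * t) * b t"
  proof -
    have "exp (\<mu>s * t) * a 0 \<le> exp (\<mu>s * t) * (h * (exp ((- \<mu>u + \<epsilon>) * t) * b t))"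
      using start growth[of 0] t h
      by (intro mult_left_mono) (auto intro: order_trans mult_left_mono)
    also have "\<dots> = h * (exp (\<mu>s * t) * exp ((- \<mu>u + \<epsilon>) * t)) * b t"
      by (simp add: algebra_simps)
    also have "\<dots> = h * exp (- \<gamma> * t) * b t"
      unfolding mult_exp_exp by (simp add: \<gamma>_def algebra_simps)
    finally show ?thesis .
  qed
  ultimately have "a t \<le> h * exp (- \<gamma> * t) * b t + \<epsilon> * ((1 - exp (- \<gamma> * t)) / \<gamma> * b t)"
    by linarith
  also have "\<dots> = cone_slope \<gamma> \<epsilon> h t * b t"
    using \<gamma> by (simp add: cone_slope_def field_simps)
  finally show ?thesis by (simp add: \<gamma>_def)
qed

lemma short_time_bounds:
  assumes t0: "0 \<le> t0" and s: "t0 \<le> s" "s \<le> \<tau>" "s - t0 \<le> \<delta>"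
    and K: "\<And>p. 0 \<le> p \<Longrightarrow> p \<le> \<delta> \<Longrightarrow> exp (\<mu>s * p) \<le> K \<and> exp (- \<mu>u * p) \<le> K"
    and M: "\<And>r. r \<in> {t0..s} \<Longrightarrow> max (a r) (b r) \<le> M"
    and v: "v \<in> {t0..s}"
  shows "a v \<le> K * a t0 + \<epsilon> * (\<delta> * (K * M))" and "b v \<le> K * b s + \<epsilon> * (\<delta> * (K * M))"
proof -
  have sub: "{t0..s} \<subseteq> {0..\<tau>}" using t0 s by auto
  have K': "0 \<le> exp (\<mu>s * (q - r)) \<and> exp (\<mu>s * (q - r)) \<le> K"
    "0 \<le> exp (- \<mu>u * (q - r)) \<and> exp (- \<mu>u * (q - r)) \<le> K"
    if "t0 \<le> r" "r \<le> q" "q \<le> s" for r q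
    using K[of "q - r"] that s by auto
  have int_le: "\<epsilon> * integral {u..u'} (\<lambda>r. w r * max (a r) (b r)) \<le> \<epsilon> * (\<delta> * (K * M))"
    if u: "t0 \<le> u" "u \<le> u'" "u' \<le> s" and w_cont: "continuous_on {u..u'} w"
      and w: "\<And>r. r \<in> {u..u'} \<Longrightarrow> 0 \<le> w r \<and> w r \<le> K" for u u' w
  proof -
    have "0 \<le> max (a r) (b r) \<and> max (a r) (b r) \<le> M" if "r \<in> {u..u'}" for r
      using a_nonneg[of r] M[of r] that u sub by auto
    then have "integral {u..u'} (\<lambda>r. w r * max (a r) (b r)) \<le> (u' - u) * (K * M)"
      using u sub
      by (intro integral_mult_le_bound w_cont w continuous_intros continuous_on_subset[OF a_cont]
          continuous_on_subset[OF b_cont]) auto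
    also have "\<dots> \<le> \<delta> * (K * M)"
      using u s w[of u] M[of u] a_nonneg[of u] sub by (intro mult_right_mono) auto
    finally show ?thesis using eps_nonneg by (rule mult_left_mono)
  qed
  have "exp (\<mu>s * (v - t0)) * a t0 \<le> K * a t0"
    using K'[of t0 v] v a_nonneg[of t0] t0 s by (intro mult_right_mono) auto
  moreover have "\<epsilon> * integral {t0..v} (\<lambda>r. exp (\<mu>s * (v - r)) * max (a r) (b r)) \<le> \<epsilon> * (\<delta> * (K * M))"
    using v K' by (intro int_le continuous_intros) auto
  moreover have "a v \<le> exp (\<mu>s * (v - t0)) * a t0
      + \<epsilon> * integral {t0..v} (\<lambda>r. exp (\<mu>s * (v - r)) * max (a r) (b r))"
    using forward[of t0 v] v s t0 by simp
  ultimately show "a v \<le> K * a t0 + \<epsilon> * (\<delta> * (K * M))" by linarith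
  have "exp (- \<mu>u * (s - v)) * b s \<le> K * b s"
    using K'[of v s] v b_nonneg[of s] t0 s by (intro mult_right_mono) auto
  moreover have "\<epsilon> * integral {v..s} (\<lambda>r. exp (- \<mu>u * (r - v)) * max (a r) (b r)) \<le> \<epsilon> * (\<delta> * (K * M))"
    using v K' by (intro int_le continuous_intros) auto
  moreover have "b v \<le> exp (- \<mu>u * (s - v)) * b s
      + \<epsilon> * integral {v..s} (\<lambda>r. exp (- \<mu>u * (r - v)) * max (a r) (b r))"
    using backward[of v s] v s t0 by simp
  ultimately show "b v \<le> K * b s + \<epsilon> * (\<delta> * (K * M))" by linarith
qed

lemma cone_step:
  assumes t0: "0 \<le> t0" and at0: "a t0 \<le> h * b t0" and h: "0 \<le> h"
    and s: "t0 \<le> s" "s \<le> \<tau>" "s - t0 \<le> \<delta>"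
    and K: "\<And>p. 0 \<le> p \<Longrightarrow> p \<le> \<delta> \<Longrightarrow> exp (\<mu>s * p) \<le> K \<and> exp (- \<mu>u * p) \<le> K"
    and small: "K * K * h + \<epsilon> * K * K * \<delta> + \<epsilon> * K * \<delta> < 1"
  shows "a s \<le> b s"
proof -
  have sub: "{t0..s} \<subseteq> {0..\<tau>}" using t0 s by auto
  have K1: "1 \<le> K" using K[of 0] s by simp
  have max_cont: "continuous_on {t0..s} (\<lambda>r. max (a r) (b r))"
    using sub by (intro continuous_intros continuous_on_subset[OF a_cont] continuous_on_subset[OF b_cont])
  obtain r2 where r2: "r2 \<in> {t0..s}"
    and M_max: "\<And>r. r \<in> {t0..s} \<Longrightarrow> max (a r) (b r) \<le> max (a r2) (b r2)"
    using continuous_attains_sup[OF compact_Icc _ max_cont] s by auto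
  define M where "M = max (a r2) (b r2)"
  have M0: "0 \<le> M" using a_nonneg[of r2] sub r2 by (auto simp: M_def)
  have bounds: "a v \<le> K * a t0 + \<epsilon> * (\<delta> * (K * M))" "b v \<le> K * b s + \<epsilon> * (\<delta> * (K * M))"
    if "v \<in> {t0..s}" for v
    using short_time_bounds[of t0 s \<delta> K M v] t0 s K M_max[folded M_def] that by blast+
  define c where "c = K * h + \<epsilon> * K * \<delta>"
  have a_le: "a v \<le> c * M" if v: "v \<in> {t0..s}" for v
  proof -
    have "a t0 \<le> h * M" using at0 h M_max[of t0] s
      by (auto simp: M_def intro: order_trans mult_left_mono)
    then have "K * a t0 \<le> K * (h * M)" using K1 by simp
    moreover have "c * M = K * (h * M) + \<epsilon> * (\<delta> * (K * M))" by (simp add: c_def algebra_simps)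
    ultimately show ?thesis using bounds(1)[OF v] by linarith
  qed
  have "0 \<le> \<epsilon> * K * \<delta>" using eps_nonneg K1 s by simp
  moreover have "\<epsilon> * K * \<delta> \<le> \<epsilon> * K * K * \<delta>"
    using mult_left_mono[OF K1 \<open>0 \<le> \<epsilon> * K * \<delta>\<close>] by (simp add: algebra_simps)
  moreover have "K * h \<le> K * K * h" using K1 h by (simp add: mult_right_mono)
  ultimately have c1: "c < 1" using small by (simp add: c_def)
  have b_ge: "(1 - \<epsilon> * K * \<delta>) * M \<le> K * b s"
  proof (cases "a r2 \<le> b r2")
    case True
    then have "M = b r2" by (simp add: M_def)
    moreover have "(1 - \<epsilon> * K * \<delta>) * M = M - \<epsilon> * (\<delta> * (K * M))" by (simp add: algebra_simps)
    ultimately show ?thesis using bounds(2)[OF r2] by linarith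
  next
    \<comment> \<open>if the maximum is attained by \<open>a\<close>, then \<open>M \<le> c M\<close> with \<open>c < 1\<close>, so \<open>M = 0\<close>\<close>
    case False
    then have "M \<le> c * M" using a_le[OF r2] by (simp add: M_def)
    then have "(1 - c) * M \<le> 0" by (simp add: algebra_simps)
    then have "M = 0" using c1 M0 by (simp add: mult_le_0_iff)
    then show ?thesis using b_nonneg[of s] K1 s t0 by simp
  qed
  have "K * c \<le> 1 - \<epsilon> * K * \<delta>" using small by (simp add: c_def algebra_simps)
  then have "K * c * M \<le> (1 - \<epsilon> * K * \<delta>) * M" using M0 by (rule mult_right_mono)
  moreover have "K * a s \<le> K * c * M" using a_le[of s] s K1 by simp
  ultimately have "K * a s \<le> K * b s" using b_ge by linarith
  then show ?thesis using K1 by simp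
qed

lemma cone_invariant:
  assumes start: "a 0 \<le> h * b 0" and h: "\<epsilon> / (\<mu>u - \<mu>s - \<epsilon>) \<le> h" "h < 1"
    and s: "s \<in> {0..\<tau>}"
  shows "a s \<le> b s"
proof -
  have \<gamma>: "0 < \<mu>u - \<mu>s - \<epsilon>" by (rule gap)
  have h0: "0 \<le> h" using h(1) eps_nonneg \<gamma> by (meson divide_nonneg_pos order_trans)
  define c where "c = \<bar>\<mu>s\<bar> + \<bar>\<mu>u\<bar>"
  obtain \<delta> where \<delta>: "0 < \<delta>"
    and small: "exp (c * \<delta>) * exp (c * \<delta>) * h + \<epsilon> * exp (c * \<delta>) * exp (c * \<delta>) * \<delta>
        + \<epsilon> * exp (c * \<delta>) * \<delta> < 1"
    using small_step_exists[OF h(2)] by blast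
  have K: "exp (\<mu>s * p) \<le> exp (c * \<delta>) \<and> exp (- \<mu>u * p) \<le> exp (c * \<delta>)"
    if "0 \<le> p" "p \<le> \<delta>" for p
    using exp_mult_le_exp_mult[of \<mu>s c p \<delta>] exp_mult_le_exp_mult[of "- \<mu>u" c p \<delta>] that
    by (simp add: c_def)
  have covered: "\<forall>s\<in>{0..min (real n * \<delta>) \<tau>}. a s \<le> b s" for n :: nat
  proof (induction n)
    case 0
    have "h * b 0 \<le> 1 * b 0" using h(2) b_nonneg[of 0] tau_nonneg by (intro mult_right_mono) auto
    then show ?case using start by auto
  next
    case (Suc n)
    define t0 where "t0 = min (real n * \<delta>) \<tau>"
    have t0: "t0 \<in> {0..\<tau>}" using \<delta> tau_nonneg by (auto simp: t0_def)
    have "a t0 \<le> cone_slope (\<mu>u - \<mu>s - \<epsilon>) \<epsilon> h t0 * b t0"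
      using a_le_cone_slope[OF t0 _ start h0] Suc.IH by (simp add: t0_def)
    also have "\<dots> \<le> h * b t0"
      using cone_slope_le[OF \<gamma> h(1)] t0 b_nonneg[OF t0] by (simp add: mult_right_mono)
    finally have at0: "a t0 \<le> h * b t0" .
    show ?case
    proof
      fix s assume s: "s \<in> {0..min (real (Suc n) * \<delta>) \<tau>}"
      show "a s \<le> b s"
      proof (cases "s \<le> t0")
        case True
        then show ?thesis using Suc.IH s by (auto simp: t0_def)
      next
        case False
        then have "s - t0 \<le> \<delta>" using s by (auto simp: t0_def algebra_simps)
        then show ?thesis
          using cone_step[OF _ at0 h0 _ _ _ K small] t0 False s by auto
      qed
    qed
  qed
  obtain n :: nat where "\<tau> / \<delta> \<le> real n" using real_arch_simple by blast
  then have "min (real n * \<delta>) \<tau> = \<tau>" using \<delta> by (simp add: field_simps)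
  then show ?thesis using covered[of n] s by simp
qed

lemma cone_estimates:
  assumes start: "a 0 \<le> h * b 0" and h: "\<epsilon> / (\<mu>u - \<mu>s - \<epsilon>) \<le> h" "h < 1"
  shows "b 0 \<le> exp ((- \<mu>u + \<epsilon>) * \<tau>) * b \<tau>"
    and "a \<tau> \<le> cone_slope (\<mu>u - \<mu>s - \<epsilon>) \<epsilon> h \<tau> * b \<tau>"
proof -
  have cone: "a s \<le> b s" if "s \<in> {0..\<tau>}" for s using cone_invariant[OF start h that] .
  have "0 \<le> h" using h(1) eps_nonneg gap by (meson divide_nonneg_pos order_trans)
  show "b 0 \<le> exp ((- \<mu>u + \<epsilon>) * \<tau>) * b \<tau>"
    using b_le_backward_growth[of \<tau> 0] cone tau_nonneg by simp
  show "a \<tau> \<le> cone_slope (\<mu>u - \<mu>s - \<epsilon>) \<epsilon> h \<tau> * b \<tau>"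
    using a_le_cone_slope[OF _ _ start \<open>0 \<le> h\<close>] cone tau_nonneg by simp
qed

end

lemma lip_max_Pair:
  assumes "lip_max B e"
  shows "norm (B (x1, y1) - B (x2, y2)) \<le> e * max (norm (x1 - x2)) (norm (y1 - y2))"
  using assms unfolding lip_max_def by (metis fst_conv snd_conv)

lemma lip_max_continuous_on:
  assumes "lip_max B e" "0 \<le> e"
  shows "continuous_on A B"
proof (rule lipschitz_on_continuous_on)
  show "e-lipschitz_on A B"
  proof (rule lipschitz_onI)
    fix p q :: "'a \<times> 'b"
    have "(fst p - fst q, snd p - snd q) = p - q" by (simp add: prod_eq_iff)
    then have "max (norm (fst p - fst q)) (norm (snd p - snd q)) \<le> norm (p - q)"
      using norm_fst_le[of "fst p - fst q" "snd p - snd q"] norm_snd_le[of "snd p - snd q" "fst p - fst q"]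
      by simp
    then show "dist (B p) (B q) \<le> e * dist p q"
      using assms mult_left_mono unfolding lip_max_def dist_norm by (meson order_trans)
  qed (use assms in auto)
qed

locale perturbed_dichotomy =
  fixes T :: "real \<Rightarrow> ('x::banach \<Rightarrow>\<^sub>L 'x)" and S :: "real \<Rightarrow> ('y::banach \<Rightarrow>\<^sub>L 'y)"
    and B1 :: "'x \<times> 'y \<Rightarrow> 'x" and B2 :: "'x \<times> 'y \<Rightarrow> 'y" and \<mu>s \<mu>u \<epsilon> :: real
  assumes T_sg: "c0_semigroup T" and S_sg: "c0_semigroup (\<lambda>t. S (- t))"
    and T_bd: "\<And>t. 0 \<le> t \<Longrightarrow> norm (T t) \<le> exp (\<mu>s * t)"
    and S_bd: "\<And>t. 0 \<le> t \<Longrightarrow> norm (S (- t)) \<le> exp (- \<mu>u * t)"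
    and eps_nonneg: "0 \<le> \<epsilon>" and B1_lip: "lip_max B1 \<epsilon>" and B2_lip: "lip_max B2 \<epsilon>"
    and gap: "0 < \<mu>u - \<mu>s - \<epsilon>"
begin

lemma solutions_dichotomy_estimates:
  assumes sol: "solves_sys T S B1 B2 0 \<tau> x y" and sol': "solves_sys T S B1 B2 0 \<tau> x' y'"
    and \<tau>: "0 \<le> \<tau>"
  shows "dichotomy_estimates (\<lambda>r. norm (x r - x' r)) (\<lambda>r. norm (y r - y' r)) \<mu>s \<mu>u \<epsilon> \<tau>"
proof -
  have cont: "continuous_on {0..\<tau>} x" "continuous_on {0..\<tau>} y"
    if "solves_sys T S B1 B2 0 \<tau> x y" for x y
    using that by (simp_all add: solves_sys_def)
  have B_cont: "continuous_on {0..\<tau>} (\<lambda>s. B1 (x s, y s))" "continuous_on {0..\<tau>} (\<lambda>s. B2 (x s, y s))"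
    if "solves_sys T S B1 B2 0 \<tau> x y" for x y
    using cont[OF that] by (auto intro!: continuous_on_compose2[OF lip_max_continuous_on[of _ \<epsilon>]]
        continuous_on_Pair B1_lip B2_lip eps_nonneg)
  have x_eq: "x t = T (t - 0) (x 0) + integral {0..t} (\<lambda>s. T (t - s) (B1 (x s, y s)))"
    if "solves_sys T S B1 B2 0 \<tau> x y" "t \<in> {0..\<tau>}" for x y t
    using that unfolding solves_sys_def by blast
  have y_eq: "y t = S (- (\<tau> - t)) (y \<tau>) - integral {t..\<tau>} (\<lambda>s. S (- (s - t)) (B2 (x s, y s)))"
    if "solves_sys T S B1 B2 0 \<tau> x y" "t \<in> {0..\<tau>}" for x y t
    using that unfolding solves_sys_def minus_diff_eq by blast
  have m_cont: "continuous_on {0..\<tau>} (\<lambda>s. max (norm (x s - x' s)) (norm (y s - y' s)))"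
    using cont[OF sol] cont[OF sol'] by (intro continuous_intros)
  show ?thesis
  proof
    show "continuous_on {0..\<tau>} (\<lambda>r. norm (x r - x' r))" "continuous_on {0..\<tau>} (\<lambda>r. norm (y r - y' r))"
      by (intro continuous_on_norm continuous_on_diff cont[OF sol] cont[OF sol'])+
  next
    fix t t' assume tt: "0 \<le> t" "t \<le> t'" "t' \<le> \<tau>"
    show "norm (x t' - x' t') \<le> exp (\<mu>s * (t' - t)) * norm (x t - x' t)
        + \<epsilon> * integral {t..t'} (\<lambda>s. exp (\<mu>s * (t' - s)) * max (norm (x s - x' s)) (norm (y s - y' s)))"
      by (rule mild_solution_diff_le_forward[OF T_sg T_bd B_cont(1)[OF sol] B_cont(1)[OF sol']
            x_eq[OF sol] x_eq[OF sol'] m_cont lip_max_Pair[OF B1_lip] tt])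
  next
    fix t t' assume tt: "0 \<le> t" "t \<le> t'" "t' \<le> \<tau>"
    show "norm (y t - y' t) \<le> exp (- \<mu>u * (t' - t)) * norm (y t' - y' t')
        + \<epsilon> * integral {t..t'} (\<lambda>s. exp (- \<mu>u * (s - t)) * max (norm (x s - x' s)) (norm (y s - y' s)))"
      by (rule mild_solution_diff_le_backward[where V = "\<lambda>t. S (- t)", OF S_sg S_bd
            B_cont(2)[OF sol] B_cont(2)[OF sol'] y_eq[OF sol] y_eq[OF sol'] m_cont
            lip_max_Pair[OF B2_lip] tt])
  qed (use \<tau> eps_nonneg gap in simp_all)
qed

lemma Hcorr_AB_cond:
  assumes t: "0 \<le> t"
    and \<alpha>: "\<epsilon> / (\<mu>u - \<mu>s - \<epsilon>) \<le> \<alpha>" "\<alpha> < 1" "cone_slope (\<mu>u - \<mu>s - \<epsilon>) \<epsilon> \<alpha> t \<le> \<alpha>'"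
    and \<beta>: "\<epsilon> / (\<mu>u - \<mu>s - \<epsilon>) \<le> \<beta>" "\<beta> < 1" "cone_slope (\<mu>u - \<mu>s - \<epsilon>) \<epsilon> \<beta> t \<le> \<beta>'"
  shows "AB_cond (Hcorr T S B1 B2 t) \<alpha> \<alpha>' (exp (- \<mu>u + \<epsilon>) powr t) \<beta> \<beta>' (exp (\<mu>s + \<epsilon>) powr t)"
  unfolding AB_cond_def exp_powr_real
proof (intro allI impI conjI)
  fix x1 y1 x2 y2 x1' y1' x2' y2'
  assume "Hcorr T S B1 B2 t (x1, y1) (x2, y2)" "Hcorr T S B1 B2 t (x1', y1') (x2', y2')"
  then obtain x y x' y' where sol: "solves_sys T S B1 B2 0 t x y" "solves_sys T S B1 B2 0 t x' y'"
    and ends: "x 0 = x1" "y 0 = y1" "x t = x2" "y t = y2"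
      "x' 0 = x1'" "y' 0 = y1'" "x' t = x2'" "y' t = y2'"
    unfolding Hcorr_def by auto
  interpret D: dichotomy_estimates "\<lambda>r. norm (x r - x' r)" "\<lambda>r. norm (y r - y' r)" \<mu>s \<mu>u \<epsilon> t
    by (rule solutions_dichotomy_estimates[OF sol t])
  interpret R: dichotomy_estimates "\<lambda>r. norm (y (t - r) - y' (t - r))"
      "\<lambda>r. norm (x (t - r) - x' (t - r))" "- \<mu>u" "- \<mu>s" \<epsilon> t
    by (rule D.time_reversal)
  have rev: "- \<mu>s - - \<mu>u - \<epsilon> = \<mu>u - \<mu>s - \<epsilon>" by simp
  {
    assume A: "norm (x1 - x1') \<le> \<alpha> * norm (y1 - y1')"
    show "norm (y1 - y1') \<le> exp ((- \<mu>u + \<epsilon>) * t) * norm (y2 - y2')"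
      using D.cone_estimates(1)[of \<alpha>] A \<alpha> ends by simp
    have "norm (x2 - x2') \<le> cone_slope (\<mu>u - \<mu>s - \<epsilon>) \<epsilon> \<alpha> t * norm (y2 - y2')"
      using D.cone_estimates(2)[of \<alpha>] A \<alpha> ends by simp
    also have "\<dots> \<le> \<alpha>' * norm (y2 - y2')" using \<alpha>(3) by (rule mult_right_mono) simp
    finally show "norm (x2 - x2') \<le> \<alpha>' * norm (y2 - y2')" .
  }
  {
    assume B: "norm (y2 - y2') \<le> \<beta> * norm (x2 - x2')"
    show "norm (x2 - x2') \<le> exp ((\<mu>s + \<epsilon>) * t) * norm (x1 - x1')"
      using R.cone_estimates(1)[of \<beta>, unfolded rev] B \<beta> ends by simp
    have "norm (y1 - y1') \<le> cone_slope (\<mu>u - \<mu>s - \<epsilon>) \<epsilon> \<beta> t * norm (x1 - x1')"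
      using R.cone_estimates(2)[of \<beta>, unfolded rev] B \<beta> ends by simp
    also have "\<dots> \<le> \<beta>' * norm (x1 - x1')" using \<beta>(3) by (rule mult_right_mono) simp
    finally show "norm (y1 - y1') \<le> \<beta>' * norm (x1 - x1')" .
  }
qed

end

theorem lemma3p4:
  fixes T :: "real \<Rightarrow> ('x::banach \<Rightarrow>\<^sub>L 'x)"
    and S :: "real \<Rightarrow> ('y::banach \<Rightarrow>\<^sub>L 'y)"
    and B1 :: "'x \<times> 'y \<Rightarrow> 'x" and B2 :: "'x \<times> 'y \<Rightarrow> 'y"
    and \<mu>s \<mu>u \<epsilon> \<alpha> \<beta> :: real
  assumes T_sg: "c0_semigroup T"
    and S_sg: "c0_semigroup (\<lambda>t. S (- t))"
    and T_bd: "\<And>t. 0 \<le> t \<Longrightarrow> norm (T t) \<le> exp (\<mu>s * t)"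
    and S_bd: "\<And>t. 0 \<le> t \<Longrightarrow> norm (S (- t)) \<le> exp (- \<mu>u * t)"
    and eps_nonneg: "0 \<le> \<epsilon>"
    and B1_lip: "lip_max B1 \<epsilon>"
    and B2_lip: "lip_max B2 \<epsilon>"
    and gap: "\<mu>u - \<mu>s - 2 * \<epsilon> > 0"
  shows
    "(\<epsilon> / (\<mu>u - \<mu>s - \<epsilon>) \<le> \<alpha> \<and> \<alpha> < 1 \<and> \<epsilon> / (\<mu>u - \<mu>s - \<epsilon>) \<le> \<beta> \<and> \<beta> < 1 \<longrightarrow>
       (\<forall>t\<ge>0. AB_cond (Hcorr T S B1 B2 t)
                 \<alpha> \<alpha> (exp (- \<mu>u + \<epsilon>) powr t) \<beta> \<beta> (exp (\<mu>s + \<epsilon>) powr t)))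
   \<and>
    (\<forall>\<epsilon>1 t. \<epsilon> / (\<mu>u - \<mu>s - \<epsilon>) < \<alpha> \<and> \<alpha> < 1 \<and> \<epsilon> / (\<mu>u - \<mu>s - \<epsilon>) < \<beta> \<and> \<beta> < 1 \<and>
        0 < \<epsilon>1 \<and> \<epsilon>1 \<le> t \<longrightarrow>
       (let k = (\<lambda>h. ((\<mu>u - \<mu>s - \<epsilon> - \<epsilon> / h) * exp (- (\<mu>u - \<mu>s - \<epsilon>) * \<epsilon>1) + \<epsilon> / h)
                      / (\<mu>u - \<mu>s - \<epsilon>))
        in k \<alpha> < 1 \<and> k \<beta> < 1 \<and>
           AB_cond (Hcorr T S B1 B2 t)
             \<alpha> (k \<alpha> * \<alpha>) (exp (- \<mu>u + \<epsilon>) powr t) \<beta> (k \<beta> * \<beta>) (exp (\<mu>s + \<epsilon>) powr t)))"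
proof -
  have \<gamma>: "0 < \<mu>u - \<mu>s - \<epsilon>" using gap eps_nonneg by linarith
  interpret perturbed_dichotomy T S B1 B2 \<mu>s \<mu>u \<epsilon>
    using T_sg S_sg T_bd S_bd eps_nonneg B1_lip B2_lip \<gamma> by unfold_locales
  show ?thesis
  proof (intro conjI impI allI)
    fix t :: real
    assume "\<epsilon> / (\<mu>u - \<mu>s - \<epsilon>) \<le> \<alpha> \<and> \<alpha> < 1 \<and> \<epsilon> / (\<mu>u - \<mu>s - \<epsilon>) \<le> \<beta> \<and> \<beta> < 1" "0 \<le> t"
    then show "AB_cond (Hcorr T S B1 B2 t) \<alpha> \<alpha> (exp (- \<mu>u + \<epsilon>) powr t) \<beta> \<beta> (exp (\<mu>s + \<epsilon>) powr t)"
      by (intro Hcorr_AB_cond cone_slope_le[OF \<gamma>]) auto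
  next
    fix \<epsilon>1 t :: real
    assume hyp: "\<epsilon> / (\<mu>u - \<mu>s - \<epsilon>) < \<alpha> \<and> \<alpha> < 1 \<and> \<epsilon> / (\<mu>u - \<mu>s - \<epsilon>) < \<beta> \<and> \<beta> < 1 \<and>
        0 < \<epsilon>1 \<and> \<epsilon>1 \<le> t"
    then show "let k = (\<lambda>h. ((\<mu>u - \<mu>s - \<epsilon> - \<epsilon> / h) * exp (- (\<mu>u - \<mu>s - \<epsilon>) * \<epsilon>1) + \<epsilon> / h)
                      / (\<mu>u - \<mu>s - \<epsilon>))
        in k \<alpha> < 1 \<and> k \<beta> < 1 \<and>
           AB_cond (Hcorr T S B1 B2 t)
             \<alpha> (k \<alpha> * \<alpha>) (exp (- \<mu>u + \<epsilon>) powr t) \<beta> (k \<beta> * \<beta>) (exp (\<mu>s + \<epsilon>) powr t)"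
      unfolding Let_def
      by (intro conjI Hcorr_AB_cond contraction_factor_less_one cone_slope_le_contraction
          \<gamma> eps_nonneg) auto
  qed
qed

end
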